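(* Let $H$ be a real Hilbert space, $I=\{1,\dots,M\}$, let $f_i,h_i,T_i$ ($i\in I$) satisfy Assumption (A1)–(A4) and the parameters satisfy Condition (C) (both described below). Consider the sequences generated by the Distributed Accelerated Incremental Algorithm below, and assume that for each $i\in I$ the sequence $\{y^{(i)}_n\}$ is bounded. Then the sequences $\{T_i(y^{(i)}_n)\}$, $\{x_n\}$, $\{w^{(i)}_n\}$, $\{z^{(i)}_n\}$ and $\{d^{(i)}_n\}$ ($i\in I$) are bounded.
   Context: Assumption (A1): each $f_i:H\to\mathbb{R}$ is continuous and convex. (A2): each $h_i:H\to\mathbb{R}$ is convex and Fréchet differentiable, and $\nabla h_i$ is $(1/L_i)$-Lipschitz continuous for some $L_i>0$. (A3): each $T_i:H\to H$ is firmly nonexpansive, i.e. $\|T_ix-T_iy\|^2\le\langle T_ix-T_iy,x-y\rangle$ for all $x,y$. (A4): $S=\bigcap_{i=1}^M\mathrm{Fix}\,T_i\neq\emptyset$ and, with $\psi=\sum_{i=1}^M(f_i+h_i)$, $\Omega=\{\hat x\in S:\psi(\hat x)=\min_{x\in S}\psi(x)\}\neq\emptyset$. Condition (C): $\{\theta_n\},\{\lambda_n\},\{\beta_n\},\{\alpha_n\}$ are decreasing real sequences converging to $0$ with $\theta_n\in[0,1)$, $\lambda_n\in(0,2\min_{i\in I}L_i]$, $\beta_n\in(0,1]$, $\alpha_n\in(0,1]$, and: (C1) $\sum_n\alpha_n=\infty$; (C2) $\lim_n\frac{1}{\alpha_{n+1}}\big|\frac{1}{\lambda_{n+1}}-\frac{1}{\lambda_n}\big|=0$;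 (C3) $\lim_n\frac{1}{\lambda_{n+1}}\big|1-\frac{\alpha_n}{\alpha_{n+1}}\big|=0$; (C4) $\lim_n\frac{\alpha_n}{\lambda_n}=0$; (C5) $\lim_n\frac{\theta_n}{\alpha_{n+1}\lambda_{n+1}}=0$; (C6) $\frac{\lambda_n}{\lambda_{n+1}}\le\sigma$ for some $\sigma\ge1$; (C7) $\lim_n\frac{\beta_n}{\alpha_{n+1}}=0$. $\mathrm{prox}_{\lambda g}(x)=\arg\min_y\{g(y)+\frac{1}{2\lambda}\|x-y\|^2\}$. Distributed Accelerated Incremental Algorithm: choose $x_1\in H$, $w^{(i)}_0,z^{(i)}_0,u^{(i)}\in H$ and set $d^{(i)}_1=-\nabla h_i(z^{(i)}_0)$ ($i\in I$). For $n=1,2,\dots$: set $w^{(1)}_n=x_n$; for $i=1,\dots,M$ compute $z^{(i)}_n=w^{(i)}_n+\theta_n(w^{(i)}_n-w^{(i)}_{n-1})$, $d^{(i)}_{n+1}=-\nabla h_i(z^{(i)}_n)+\beta_nd^{(i)}_n$, $y^{(i)}_n=\mathrm{prox}_{\lambda_nf_i}(z^{(i)}_n+\lambda_nd^{(i)}_{n+1})$, $w^{(i+1)}_n=\alpha_nu^{(i)}+(1-\alpha_n)T_i(y^{(i)}_n)$; then set $x_{n+1}=w^{(M+1)}_n$. *)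

theory Defs
  imports "HOL-Analysis.Analysis"
begin

text \<open>Proximal operator: prox_{lam g}(x) = argmin_y { g y + (1/(2 lam)) * norm(x - y)^2 }.
  For continuous convex g and lam > 0 on a Hilbert space the minimiser exists and is unique.\<close>
definition prox :: "real \<Rightarrow> ('a::real_normed_vector \<Rightarrow> real) \<Rightarrow> 'a \<Rightarrow> 'a" where
  "prox lam g x = (SOME y. \<forall>v. g y + (1 / (2 * lam)) * (norm (x - y))\<^sup>2
                               \<le> g v + (1 / (2 * lam)) * (norm (x - v))\<^sup>2)"

definition firmly_nonexpansive :: "('a::real_inner \<Rightarrow> 'a) \<Rightarrow> bool" where
  "firmly_nonexpansive T \<longleftrightarrow> (\<forall>x y. (norm (T x - T y))\<^sup>2 \<le> inner (T x - T y) (x - y))"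

definition Fix :: "('a \<Rightarrow> 'a) \<Rightarrow> 'a set" where
  "Fix T = {x. T x = x}"

end

theory Submission
  imports Defs
begin

text \<open>Only the nonexpansiveness of the \<open>T i\<close> and the Lipschitz continuity of the
  gradients enter.
  Lipschitz maps send bounded sets to bounded sets, so the bound on \<open>y i\<close> passes to
  \<open>T i \<circ> y i\<close>, then to the convex combinations \<open>w (i + 1)\<close>, to \<open>x\<close> and to the
  inertial points \<open>z i\<close>.  The directions obey \<open>d i (n + 1) = g n + \<beta> n *\<^sub>R d i n\<close> with
  \<open>g\<close> bounded and eventually \<open>\<beta> n \<le> 1/2\<close>, a contracting recursion, so they stay bounded.\<close>

lemma firmly_nonexpansive_imp_lipschitz:
  assumes "firmly_nonexpansive T"
  shows "1-lipschitz_on S T"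
proof (rule lipschitz_onI)
  fix a b
  have "(norm (T a - T b))\<^sup>2 \<le> inner (T a - T b) (a - b)"
    using assms unfolding firmly_nonexpansive_def by blast
  also have "\<dots> \<le> norm (T a - T b) * norm (a - b)"
    by (rule norm_cauchy_schwarz)
  finally have "norm (T a - T b) * norm (T a - T b) \<le> norm (T a - T b) * norm (a - b)"
    by (simp add: power2_eq_square)
  then have "norm (T a - T b) \<le> norm (a - b)"
    by (cases "norm (T a - T b) = 0") (auto simp: mult_le_cancel_left)
  then show "dist (T a) (T b) \<le> 1 * dist a b"
    by (simp add: dist_norm)
qed simp

lemma bounded_lipschitz_image:
  assumes "C-lipschitz_on S f" "bounded S"
  shows "bounded (f ` S)"
proof -
  obtain e where e: "\<forall>a\<in>S. \<forall>b\<in>S. dist a b \<le> e"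
    using \<open>bounded S\<close> bounded_two_points by blast
  have "dist (f a) (f b) \<le> C * e" if "a \<in> S" "b \<in> S" for a b
    using lipschitz_onD[OF assms(1) that] e that lipschitz_on_nonneg[OF assms(1)]
    by (meson mult_left_mono order_trans)
  then show ?thesis
    unfolding bounded_two_points by blast
qed

lemma bounded_range_iff_bounded_tail:
  fixes f :: "nat \<Rightarrow> 'a::metric_space"
  shows "bounded (range f) \<longleftrightarrow> bounded (f ` {k..})"
proof -
  have "{..<k} \<union> {k..} = (UNIV :: nat set)"
    by auto
  then have "range f = f ` {..<k} \<union> f ` {k..}"
    by (metis image_Un)
  then show ?thesis
    by (simp add: finite_imp_bounded)
qed

lemma bounded_image_convex_combination:
  fixes a :: "nat \<Rightarrow> 'a::real_normed_vector"
  assumes "bounded (a ` S)" "\<And>n. n \<in> S \<Longrightarrow> 0 \<le> \<alpha> n \<and> \<alpha> n \<le> 1"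
  shows "bounded ((\<lambda>n. \<alpha> n *\<^sub>R c + (1 - \<alpha> n) *\<^sub>R a n) ` S)"
proof (rule bounded_subset)
  let ?H = "convex hull (insert c (a ` S))"
  show "bounded ?H"
    using assms(1) by (simp add: bounded_convex_hull)
  have "\<alpha> n *\<^sub>R c + (1 - \<alpha> n) *\<^sub>R a n \<in> ?H" if "n \<in> S" for n
  proof (rule convexD[OF convex_convex_hull])
    show "c \<in> ?H" "a n \<in> ?H"
      using that by (auto intro: hull_inc)
  qed (use assms(2)[OF that] in auto)
  then show "(\<lambda>n. \<alpha> n *\<^sub>R c + (1 - \<alpha> n) *\<^sub>R a n) ` S \<subseteq> ?H"
    by blast
qed

lemma bounded_range_inertial_extrapolation:
  fixes w :: "nat \<Rightarrow> 'a::real_normed_vector"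
  assumes "bounded (range w)" "bounded (range \<theta>)"
  shows "bounded (range (\<lambda>n. w n + \<theta> n *\<^sub>R (w n - w (n - 1))))"
proof -
  obtain B where B: "\<And>n. norm (w n) \<le> B"
    using assms(1) unfolding bounded_iff by blast
  obtain C where C: "\<And>n. \<bar>\<theta> n\<bar> \<le> C"
    using assms(2) unfolding bounded_iff by auto
  have "norm (w n + \<theta> n *\<^sub>R (w n - w (n - 1))) \<le> B + C * (B + B)" for n
  proof -
    have "norm (w n + \<theta> n *\<^sub>R (w n - w (n - 1))) \<le> norm (w n) + \<bar>\<theta> n\<bar> * norm (w n - w (n - 1))"
      using norm_triangle_ineq[of "w n" "\<theta> n *\<^sub>R (w n - w (n - 1))"] by simp
    also have "\<dots> \<le> B + C * (B + B)"
      using B[of n] B[of "n - 1"] C[of n] norm_triangle_ineq4[of "w n" "w (n - 1)"]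
      by (intro add_mono mult_mono) auto
    finally show ?thesis .
  qed
  then show ?thesis
    unfolding bounded_iff by blast
qed

lemma bounded_range_damped_recursion:
  fixes d g :: "nat \<Rightarrow> 'a::real_normed_vector"
  assumes "bounded (range g)" "c < 1"
    and "eventually (\<lambda>n. \<bar>\<beta> n\<bar> \<le> c \<and> d (Suc n) = g n + \<beta> n *\<^sub>R d n) sequentially"
  shows "bounded (range d)"
proof -
  obtain N where N: "\<And>n. n \<ge> N \<Longrightarrow> \<bar>\<beta> n\<bar> \<le> c \<and> d (Suc n) = g n + \<beta> n *\<^sub>R d n"
    using assms(3) unfolding eventually_sequentially by blast
  obtain G where G: "\<And>n. norm (g n) \<le> G"
    using assms(1) unfolding bounded_iff by blast
  define B where "B = max (norm (d N)) (G / (1 - c))"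
  have "G / (1 - c) \<le> B"
    by (simp add: B_def)
  then have "G + c * B \<le> B"
    using \<open>c < 1\<close> by (simp add: pos_divide_le_eq algebra_simps)
  have "norm (d (n + N)) \<le> B" for n
  proof (induction n)
    case 0
    then show ?case by (simp add: B_def)
  next
    case (Suc n)
    have rec: "\<bar>\<beta> (n + N)\<bar> \<le> c" "d (Suc n + N) = g (n + N) + \<beta> (n + N) *\<^sub>R d (n + N)"
      using N[of "n + N"] by simp_all
    have "norm (d (Suc n + N)) \<le> norm (g (n + N)) + \<bar>\<beta> (n + N)\<bar> * norm (d (n + N))"
      using rec norm_triangle_ineq[of "g (n + N)" "\<beta> (n + N) *\<^sub>R d (n + N)"] by simp
    also have "\<dots> \<le> G + c * B"
      using G Suc.IH rec by (intro add_mono mult_mono) (auto intro: order_trans[OF norm_ge_zero])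
    also have "\<dots> \<le> B" by fact
    finally show ?case .
  qed
  then have "Bseq (\<lambda>n. d (n + N))"
    by (intro BseqI') blast
  then show ?thesis
    using Bseq_offset Bseq_eq_bounded by blast
qed

theorem lemma2:
  fixes M :: nat
    and f h :: "nat \<Rightarrow> 'a::{real_inner, complete_space} \<Rightarrow> real"
    and gh :: "nat \<Rightarrow> 'a \<Rightarrow> 'a"
    and T :: "nat \<Rightarrow> 'a \<Rightarrow> 'a"
    and L :: "nat \<Rightarrow> real"
    and \<theta> lam \<beta> \<alpha> :: "nat \<Rightarrow> real"
    and x :: "nat \<Rightarrow> 'a"
    and w z d y :: "nat \<Rightarrow> nat \<Rightarrow> 'a"
    and u :: "nat \<Rightarrow> 'a"
  assumes M: "M \<ge> 1"
    \<comment> \<open>(A1)\<close>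
    and A1: "\<forall>i\<in>{1..M}. continuous_on UNIV (f i) \<and> convex_on UNIV (f i)"
    \<comment> \<open>(A2): h i convex, Frechet differentiable with gradient gh i, gradient (1/L i)-Lipschitz\<close>
    and A2_convex: "\<forall>i\<in>{1..M}. convex_on UNIV (h i)"
    and A2_grad: "\<forall>i\<in>{1..M}. \<forall>p. (h i has_derivative (\<lambda>v. inner (gh i p) v)) (at p)"
    and A2_L: "\<forall>i\<in>{1..M}. L i > 0"
    and A2_Lip: "\<forall>i\<in>{1..M}. \<forall>p q. norm (gh i p - gh i q) \<le> (1 / L i) * norm (p - q)"
    \<comment> \<open>(A3)\<close>
    and A3: "\<forall>i\<in>{1..M}. firmly_nonexpansive (T i)"
    \<comment> \<open>(A4)\<close>
    and A4_S: "(\<Inter>i\<in>{1..M}. Fix (T i)) \<noteq> {}"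
    and A4_Omega: "\<exists>xh\<in>(\<Inter>i\<in>{1..M}. Fix (T i)). \<forall>v\<in>(\<Inter>i\<in>{1..M}. Fix (T i)).
                     (\<Sum>i\<in>{1..M}. f i xh + h i xh) \<le> (\<Sum>i\<in>{1..M}. f i v + h i v)"
    \<comment> \<open>Condition (C): sequences indexed from n = 1\<close>
    and C_dec: "\<forall>n\<ge>1. \<theta> (n+1) \<le> \<theta> n \<and> lam (n+1) \<le> lam n \<and> \<beta> (n+1) \<le> \<beta> n \<and> \<alpha> (n+1) \<le> \<alpha> n"
    and C_lim: "\<theta> \<longlonglongrightarrow> 0" "lam \<longlonglongrightarrow> 0" "\<beta> \<longlonglongrightarrow> 0" "\<alpha> \<longlonglongrightarrow> 0"
    and C_range: "\<forall>n\<ge>1. 0 \<le> \<theta> n \<and> \<theta> n < 1 \<and> 0 < lam n \<and> lam n \<le> 2 * Min (L ` {1..M})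
                    \<and> 0 < \<beta> n \<and> \<beta> n \<le> 1 \<and> 0 < \<alpha> n \<and> \<alpha> n \<le> 1"
    and C1: "filterlim (\<lambda>N. \<Sum>n=1..N. \<alpha> n) at_top sequentially"
    and C2: "(\<lambda>n. (1 / \<alpha> (n+1)) * \<bar>1 / lam (n+1) - 1 / lam n\<bar>) \<longlonglongrightarrow> 0"
    and C3: "(\<lambda>n. (1 / lam (n+1)) * \<bar>1 - \<alpha> n / \<alpha> (n+1)\<bar>) \<longlonglongrightarrow> 0"
    and C4: "(\<lambda>n. \<alpha> n / lam n) \<longlonglongrightarrow> 0"
    and C5: "(\<lambda>n. \<theta> n / (\<alpha> (n+1) * lam (n+1))) \<longlonglongrightarrow> 0"
    and C6: "\<exists>\<sigma>\<ge>1. \<forall>n\<ge>1. lam n / lam (n+1) \<le> \<sigma>"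
    and C7: "(\<lambda>n. \<beta> n / \<alpha> (n+1)) \<longlonglongrightarrow> 0"
    \<comment> \<open>The algorithm (x 1, w i 0, z i 0, u i arbitrary initial data)\<close>
    and alg_d1: "\<forall>i\<in>{1..M}. d i 1 = - gh i (z i 0)"
    and alg_w1: "\<forall>n\<ge>1. w 1 n = x n"
    and alg_z: "\<forall>n\<ge>1. \<forall>i\<in>{1..M}. z i n = w i n + \<theta> n *\<^sub>R (w i n - w i (n-1))"
    and alg_d: "\<forall>n\<ge>1. \<forall>i\<in>{1..M}. d i (n+1) = - gh i (z i n) + \<beta> n *\<^sub>R d i n"
    and alg_y: "\<forall>n\<ge>1. \<forall>i\<in>{1..M}. y i n = prox (lam n) (f i) (z i n + lam n *\<^sub>R d i (n+1))"
    and alg_w: "\<forall>n\<ge>1. \<forall>i\<in>{1..M}. w (i+1) n = \<alpha> n *\<^sub>R u i + (1 - \<alpha> n) *\<^sub>R T i (y i n)"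
    and alg_x: "\<forall>n\<ge>1. x (n+1) = w (M+1) n"
    \<comment> \<open>Boundedness hypothesis\<close>
    and y_bdd: "\<forall>i\<in>{1..M}. bounded ((\<lambda>n. y i n) ` {1..})"
  shows "(\<forall>i\<in>{1..M}. bounded ((\<lambda>n. T i (y i n)) ` {1..}))
       \<and> bounded ((\<lambda>n. x n) ` {1..})
       \<and> (\<forall>i\<in>{1..M}. bounded ((\<lambda>n. w i n) ` {1..}))
       \<and> (\<forall>i\<in>{1..M}. bounded ((\<lambda>n. z i n) ` {1..}))
       \<and> (\<forall>i\<in>{1..M}. bounded ((\<lambda>n. d i n) ` {1..}))"
proof -
  have T_lipschitz: "1-lipschitz_on S (T i)" if "i \<in> {1..M}" for i S
    using A3 that firmly_nonexpansive_imp_lipschitz by blast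
  have gh_lipschitz: "(1 / L i)-lipschitz_on S (gh i)" if "i \<in> {1..M}" for i S
  proof -
    have "L i > 0"
      using A2_L that by blast
    then show ?thesis
      using A2_Lip that by (intro lipschitz_onI) (auto simp: dist_norm)
  qed
  have Ty_bounded: "bounded ((\<lambda>n. T i (y i n)) ` {1..})" if "i \<in> {1..M}" for i
    using bounded_lipschitz_image[OF T_lipschitz y_bdd[rule_format]] that
    by (simp add: image_image)
  have w_succ_bounded: "bounded (w (i + 1) ` {1..})" if "i \<in> {1..M}" for i
  proof -
    have "w (i + 1) ` {1..} = (\<lambda>n. \<alpha> n *\<^sub>R u i + (1 - \<alpha> n) *\<^sub>R T i (y i n)) ` {1..}"
      using alg_w that by auto
    moreover have "0 \<le> \<alpha> n \<and> \<alpha> n \<le> 1" if "n \<in> {1..}" for n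
      using C_range that by auto
    ultimately show ?thesis
      using bounded_image_convex_combination[OF Ty_bounded[OF that]] by metis
  qed
  have x_bounded: "bounded (x ` {1..})"
  proof (rule bounded_subset)
    show "bounded (insert (x 1) (w (M + 1) ` {1..}))"
      using w_succ_bounded M by simp
    have "x m \<in> insert (x 1) (w (M + 1) ` {1..})" if m: "m \<ge> 1" for m
    proof (cases "m = 1")
      case False
      then obtain n where "m = n + 1" "n \<ge> 1"
        using m by (cases m) auto
      then show ?thesis
        using alg_x by auto
    qed simp
    then show "x ` {1..} \<subseteq> insert (x 1) (w (M + 1) ` {1..})"
      by blast
  qed
  have w_bounded: "bounded (range (w i))" if i: "i \<in> {1..M}" for i
  proof (cases "i = 1")
    case True
    then have "w i ` {1..} = x ` {1..}"
      using alg_w1 by auto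
    then show ?thesis
      using x_bounded bounded_range_iff_bounded_tail by metis
  next
    case False
    then obtain j where "i = j + 1" "j \<in> {1..M}"
      using i by (cases i) auto
    then show ?thesis
      using w_succ_bounded bounded_range_iff_bounded_tail by metis
  qed
  have z_bounded: "bounded (range (z i))" if "i \<in> {1..M}" for i
  proof -
    have "bounded (range \<theta>)"
      using C_lim(1) convergent_imp_Bseq Bseq_eq_bounded convergentI by blast
    then have "bounded (range (\<lambda>n. w i n + \<theta> n *\<^sub>R (w i n - w i (n - 1))))"
      using w_bounded[OF that] by (rule bounded_range_inertial_extrapolation[rotated])
    moreover have "z i ` {1..} \<subseteq> range (\<lambda>n. w i n + \<theta> n *\<^sub>R (w i n - w i (n - 1)))"
      using alg_z that by auto
    ultimately show ?thesis
      using bounded_subset bounded_range_iff_bounded_tail by metis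
  qed
  have d_bounded: "bounded (range (d i))" if i: "i \<in> {1..M}" for i
  proof (rule bounded_range_damped_recursion)
    have "bounded (uminus ` gh i ` range (z i))"
      using bounded_lipschitz_image[OF gh_lipschitz z_bounded] i by simp
    then show "bounded (range (\<lambda>n. - gh i (z i n)))"
      by (simp add: image_image)
    have d_rec: "\<bar>\<beta> n\<bar> = \<beta> n \<and> d i (Suc n) = - gh i (z i n) + \<beta> n *\<^sub>R d i n"
      if "n \<ge> 1" for n
      using C_range[rule_format, OF that] alg_d[rule_format, OF that i] by simp
    have "\<forall>\<^sub>F n in sequentially. \<beta> n < 1 / 2"
      using order_tendstoD(2)[OF C_lim(3), of "1 / 2"] by simp
    moreover have "\<forall>\<^sub>F n in sequentially. n \<ge> 1"
      by (rule eventually_ge_at_top)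
    ultimately show "\<forall>\<^sub>F n in sequentially.
        \<bar>\<beta> n\<bar> \<le> 1 / 2 \<and> d i (Suc n) = - gh i (z i n) + \<beta> n *\<^sub>R d i n"
      by eventually_elim (drule d_rec, simp)
  qed simp
  show ?thesis
    using Ty_bounded x_bounded w_bounded z_bounded d_bounded
    by (auto simp flip: bounded_range_iff_bounded_tail)
qed

end
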